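(* Fix $k\ge1$ and $\gamma>0$, and take the limit ($*$-limit) $n\to\infty$, $\theta=\theta_n\to0$ with $n\theta_n\to\gamma$. Then the following hold. (1) For every $p\le k$ and every $(k_1,\dots,k_p)\in\mathbb N^p$ with $k_1+\dots+k_p=k$, $$\mathbf P\big(\widehat K_{n,k}(1)=k_1,\dots,\widehat K_{n,k}(p)=k_p;\ P_{n,k}=p\big)\to\frac{k!}{p!}\frac{\gamma^p}{\sigma_k(\gamma)}\prod_{q=1}^p\frac{\phi_{k_q}}{k_q!}.$$ (2) For every $p\le k$, $$\mathbf P(P_{n,k}=p)\to\mathbf P^*(P_k=p):=\frac{\gamma^p}{\sigma_k(\gamma)}B_{k,p}(\phi_\bullet).$$ Equivalently, the limiting probability generating function is $\mathbf E^*(u^{P_k})=\sigma_k(\gamma u)/\sigma_k(\gamma)$, with mean $\gamma\sigma_k'(\gamma)/\sigma_k(\gamma)$. (3) The limiting conditional law is $$\frac{k!}{p!}\frac{1}{B_{k,p}(\phi_\bullet)}\prod_{q=1}^p\frac{\phi_{k_q}}{k_q!},$$ which does not depend on $\gamma$. (4) For nonnegative integers $a_1,\dots,a_k$ with $\sum_i ia_i=k$ and $p=\sum_ia_i$, $$\mathbf P\big(A_{n,k}(1)=a_1,\dots,A_{n,k}(k)=a_k;\ P_{n,k}=p\big)\to\frac{\gamma^pk!}{\sigma_k(\gamma)}\prod_{i=1}^k\frac{(\phi_i/i!)^{a_i}}{a_i!}.$$ The corresponding limiting conditional law given $P_k=p$ is $$\frac{k!}{B_{k,p}(\phi_\bullet)}\prod_{i=1}^k\frac{(\phi_i/i!)^{a_i}}{a_i!},$$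 which does not depend on $\gamma$.
   Context: Let $(\phi_m)_{m\ge1}$ be nonnegative reals with $\phi_1>0$ such that $\phi(x)=\sum_{m\ge1}\phi_m x^m/m!$ has positive radius of convergence. Define $B_{k,l}(\phi_\bullet)=\frac{k!}{l!}[x^k]\phi(x)^l$, and define the polynomials $\sigma_k(\theta)=\sum_{l=1}^kB_{k,l}(\phi_\bullet)\theta^l$, i.e. $e^{\theta\phi(x)}=1+\sum_{k\ge1}\sigma_k(\theta)x^k/k!$, with $\sigma_0\equiv1$. For integers $n,k\ge1$ and $\theta>0$, let $\mathbf K_{n,k}=(K_{n,k}(1),\dots,K_{n,k}(n))$ be a random vector in $\mathbb N_0^n$ with $$\mathbf P(\mathbf K_{n,k}=(k_1,\dots,k_n))=\frac{k!}{\sigma_k(n\theta)}\prod_{m=1}^n\frac{\sigma_{k_m}(\theta)}{k_m!}\quad\text{for } k_1+\dots+k_n=k.$$ Let $P_{n,k}:=\#\{m:K_{n,k}(m)>0\}$, and let $A_{n,k}(i):=\#\{m:K_{n,k}(m)=i\}$. On the event $P_{n,k}=p$, let $(\widehat K_{n,k}(1),\dots,\widehat K_{n,k}(p))$ be the occupancies of the $p$ nonempty boxes listed in a uniformly random order (independent of everything else). Here $\mathbb N=\{1,2,\dots\}$. *)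

theory Defs
  imports "HOL-Analysis.Analysis" "HOL-Computational_Algebra.Formal_Power_Series"
begin

definition phi_fps :: "(nat \<Rightarrow> real) \<Rightarrow> real fps" where
  "phi_fps \<phi> = Abs_fps (\<lambda>m. if m = 0 then 0 else \<phi> m / fact m)"

definition bellB :: "(nat \<Rightarrow> real) \<Rightarrow> nat \<Rightarrow> nat \<Rightarrow> real" where
  "bellB \<phi> k l = fact k / fact l * fps_nth (phi_fps \<phi> ^ l) k"

definition sigma :: "(nat \<Rightarrow> real) \<Rightarrow> nat \<Rightarrow> real \<Rightarrow> real" where
  "sigma \<phi> k \<theta> = (if k = 0 then 1 else (\<Sum>l=1..k. bellB \<phi> k l * \<theta> ^ l))"

text \<open>Occupancy vectors (k_1,...,k_n) in N_0^n with sum k, as lists of length n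
  (box m corresponds to list index m-1).\<close>
definition comps :: "nat \<Rightarrow> nat \<Rightarrow> nat list set" where
  "comps n k = {ks. length ks = n \<and> sum_list ks = k}"

definition Kprob :: "(nat \<Rightarrow> real) \<Rightarrow> nat \<Rightarrow> nat \<Rightarrow> real \<Rightarrow> nat list \<Rightarrow> real" where
  "Kprob \<phi> n k \<theta> ks =
     (if ks \<in> comps n k
      then fact k / sigma \<phi> k (real n * \<theta>) * (\<Prod>m<n. sigma \<phi> (ks ! m) \<theta> / fact (ks ! m))
      else 0)"

definition Kev :: "(nat \<Rightarrow> real) \<Rightarrow> nat \<Rightarrow> nat \<Rightarrow> real \<Rightarrow> (nat list \<Rightarrow> bool) \<Rightarrow> real" where
  "Kev \<phi> n k \<theta> E = (\<Sum>ks\<in>comps n k. if E ks then Kprob \<phi> n k \<theta> ks else 0)"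

definition nonempty_boxes :: "nat list \<Rightarrow> nat set" where
  "nonempty_boxes ks = {m. m < length ks \<and> 0 < ks ! m}"

definition Pnum :: "nat list \<Rightarrow> nat" where
  "Pnum ks = card (nonempty_boxes ks)"

definition Acount :: "nat list \<Rightarrow> nat \<Rightarrow> nat" where
  "Acount ks i = card {m. m < length ks \<and> ks ! m = i}"

text \<open>Given the occupancy vector ks, the probability that listing the nonempty boxes in a
  uniformly random order (a uniformly random enumeration js of the nonempty boxes, one of
  P! equally likely) gives the occupancy sequence kk.\<close>
definition order_prob :: "nat list \<Rightarrow> nat list \<Rightarrow> real" where
  "order_prob ks kk =
     card {js. distinct js \<and> set js = nonempty_boxes ks \<and> map (\<lambda>j. ks ! j) js = kk}
       / fact (Pnum ks)"

text \<open>P(hatK_{n,k}(1)=k_1,...,hatK_{n,k}(p)=k_p; P_{n,k}=p), p = length kk.\<close>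
definition hatK_prob :: "(nat \<Rightarrow> real) \<Rightarrow> nat \<Rightarrow> nat \<Rightarrow> real \<Rightarrow> nat list \<Rightarrow> real" where
  "hatK_prob \<phi> n k \<theta> kk =
     (\<Sum>ks\<in>comps n k. if Pnum ks = length kk then Kprob \<phi> n k \<theta> ks * order_prob ks kk else 0)"

end

theory Submission
  imports Defs "HOL-Combinatorics.Multiset_Permutations"
begin

text \<open>For a composition kk = (k_1, ..., k_p) of k, the configurations whose nonempty boxes,
  read in some order, carry kk are obtained from the (n)_p injective placements of the parts,
  and all have probability k!/sigma_k(n theta) * prod_q sigma_{k_q}(theta)/k_q!. Since
  (n)_p theta^p tends to gamma^p and sigma_j(theta)/theta to phi_j, this gives (1). Every other
  event of the statement depends only on the multiset of nonzero occupancies, so its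
  probability is a finite sum of the probabilities in (1): summing over all compositions with
  p parts yields the Bell polynomial B_{k,p} in (2), summing over the rearrangements of a fixed
  multiset yields the multinomial factor in (4), and (3) and the conditional part of (4) are
  quotients of these limits.\<close>

section \<open>Compositions and partial Bell polynomials\<close>

definition compositions :: "nat \<Rightarrow> nat \<Rightarrow> nat list set" where
  "compositions p k = {kk. length kk = p \<and> (\<forall>x\<in>set kk. 0 < x) \<and> sum_list kk = k}"

lemma finite_compositions: "finite (compositions p k)"
proof (rule finite_subset)
  show "compositions p k \<subseteq> {xs. set xs \<subseteq> {0..k} \<and> length xs = p}"
    unfolding compositions_def using member_le_sum_list by fastforce
qed (simp add: finite_lists_length_eq)

lemma bij_betw_Cons_compositions:
  "bij_betw (\<lambda>(i, kk). i # kk) (SIGMA i:{1..k}. compositions p (k - i)) (compositions (Suc p) k)"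
  by (rule bij_betw_byWitness[where f' = "\<lambda>kk. (hd kk, tl kk)"])
     (auto simp: compositions_def length_Suc_conv)

lemma fps_nth_power_eq_sum_compositions:
  fixes f :: "'a::comm_ring_1 fps"
  assumes f0: "fps_nth f 0 = 0"
  shows "fps_nth (f ^ p) k = (\<Sum>kk\<in>compositions p k. \<Prod>j\<leftarrow>kk. fps_nth f j)"
proof (induction p arbitrary: k)
  case 0
  have "compositions 0 k = (if k = 0 then {[]} else {})"
    unfolding compositions_def by auto
  then show ?case by simp
next
  case (Suc p)
  have "fps_nth (f ^ Suc p) k = (\<Sum>i=0..k. fps_nth f i * fps_nth (f ^ p) (k - i))"
    by (simp add: fps_mult_nth)
  also have "\<dots> = (\<Sum>i=1..k. fps_nth f i * fps_nth (f ^ p) (k - i))"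
    by (rule sum.mono_neutral_right) (auto simp: f0 Suc_le_eq)
  also have "\<dots> = (\<Sum>i=1..k. \<Sum>kk\<in>compositions p (k - i). \<Prod>j\<leftarrow>i # kk. fps_nth f j)"
    by (simp add: Suc sum_distrib_left)
  also have "\<dots> = (\<Sum>(i, kk)\<in>(SIGMA i:{1..k}. compositions p (k - i)). \<Prod>j\<leftarrow>i # kk. fps_nth f j)"
    by (rule sum.Sigma) (auto simp: finite_compositions)
  also have "\<dots> = (\<Sum>kk\<in>compositions (Suc p) k. \<Prod>j\<leftarrow>kk. fps_nth f j)"
    using sum.reindex_bij_betw[OF bij_betw_Cons_compositions, of "\<lambda>kk. \<Prod>j\<leftarrow>kk. fps_nth f j"]
    by (simp add: case_prod_beta')
  finally show ?case .
qed

lemma prod_list_map_eq_prod_nth: "(\<Prod>j\<leftarrow>xs. f j) = (\<Prod>q<length xs. f (xs ! q))"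
  by (induction xs) (simp_all add: prod.lessThan_Suc_shift del: prod.lessThan_Suc)

lemma fps_nth_phi_fps [simp]: "fps_nth (phi_fps \<phi>) j = (if j = 0 then 0 else \<phi> j / fact j)"
  by (simp add: phi_fps_def)

lemma bellB_eq_sum_compositions:
  "bellB \<phi> k l = fact k / fact l *
     (\<Sum>kk\<in>compositions l k. \<Prod>q<length kk. \<phi> (kk ! q) / fact (kk ! q))"
proof -
  have "(\<Sum>kk\<in>compositions l k. \<Prod>j\<leftarrow>kk. fps_nth (phi_fps \<phi>) j)
      = (\<Sum>kk\<in>compositions l k. \<Prod>q<length kk. \<phi> (kk ! q) / fact (kk ! q))"
    unfolding prod_list_map_eq_prod_nth compositions_def
    by (intro sum.cong prod.cong) (auto simp: all_set_conv_all_nth)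
  then show ?thesis
    by (simp add: bellB_def fps_nth_power_eq_sum_compositions)
qed

context
  fixes \<phi> :: "nat \<Rightarrow> real"
  assumes phi_nonneg: "\<And>m. m \<ge> 1 \<Longrightarrow> \<phi> m \<ge> 0"
begin

lemma bellB_nonneg: "bellB \<phi> k l \<ge> 0"
  unfolding bellB_eq_sum_compositions compositions_def
  by (intro mult_nonneg_nonneg sum_nonneg prod_nonneg divide_nonneg_pos phi_nonneg)
     (auto simp: all_set_conv_all_nth Suc_le_eq)

lemma bellB_diagonal_pos:
  assumes "\<phi> 1 > 0"
  shows "bellB \<phi> k k > 0"
proof -
  let ?ones = "replicate k (1::nat)"
  have one: "?ones \<in> compositions k k"
    unfolding compositions_def by (simp add: sum_list_replicate)
  have "0 < (\<Prod>q<length ?ones. \<phi> (?ones ! q) / fact (?ones ! q))"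
    using assms by simp
  also have "\<dots> \<le> (\<Sum>kk\<in>compositions k k. \<Prod>q<length kk. \<phi> (kk ! q) / fact (kk ! q))"
    using phi_nonneg
    by (intro member_le_sum[OF one] prod_nonneg finite_compositions)
       (auto simp: compositions_def all_set_conv_all_nth Suc_le_eq)
  finally show ?thesis unfolding bellB_eq_sum_compositions by simp
qed

lemma sigma_pos:
  assumes "\<phi> 1 > 0" and "x > 0"
  shows "sigma \<phi> k x > 0"
proof (cases "k = 0")
  case False
  have "0 < bellB \<phi> k k * x ^ k" using bellB_diagonal_pos assms by simp
  also have "\<dots> \<le> (\<Sum>l=1..k. bellB \<phi> k l * x ^ l)"
    using False bellB_nonneg assms(2) by (intro member_le_sum) auto
  finally show ?thesis using False by (simp add: sigma_def)
qed (simp add: sigma_def)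

end

lemma bellB_0_right: "0 < k \<Longrightarrow> bellB \<phi> k 0 = 0"
  unfolding bellB_def by simp

lemma bellB_1_right: "0 < j \<Longrightarrow> bellB \<phi> j 1 = \<phi> j"
  unfolding bellB_def by simp

lemma sigma_eq_sum_atMost: "0 < k \<Longrightarrow> sigma \<phi> k x = (\<Sum>l\<le>k. bellB \<phi> k l * x ^ l)"
  unfolding sigma_def by (simp add: atMost_atLeast0 sum.atLeast_Suc_atMost bellB_0_right)

lemma isCont_sigma: "isCont (sigma \<phi> k) x"
  unfolding sigma_def by (cases "k = 0") (simp_all add: continuous_intros)

lemma tendsto_sigma_over_arg:
  assumes "0 < j" and "\<And>n. t n \<noteq> 0" and "t \<longlonglongrightarrow> 0"
  shows "(\<lambda>n. sigma \<phi> j (t n) / t n) \<longlonglongrightarrow> \<phi> j"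
proof -
  have quotient: "sigma \<phi> j x / x = (\<Sum>l=1..j. bellB \<phi> j l * x ^ (l - 1))" if "x \<noteq> 0" for x :: real
  proof -
    have "sigma \<phi> j x = (\<Sum>l=1..j. bellB \<phi> j l * x ^ (l - 1)) * x"
      using assms(1) by (auto simp: sigma_def sum_distrib_right mult.assoc power_eq_if intro!: sum.cong)
    then show ?thesis using that by simp
  qed
  have "(\<lambda>n. \<Sum>l=1..j. bellB \<phi> j l * t n ^ (l - 1)) \<longlonglongrightarrow> (\<Sum>l=1..j. bellB \<phi> j l * 0 ^ (l - 1))"
    by (intro tendsto_intros assms)
  also have "(\<Sum>l=1..j. bellB \<phi> j l * (0::real) ^ (l - 1))
      = (\<Sum>l=1..j. if l = 1 then bellB \<phi> j l else 0)"
    by (intro sum.cong) auto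
  also have "\<dots> = \<phi> j"
    using assms(1) bellB_1_right[OF assms(1)] by simp
  finally show ?thesis
    using assms(2) by (simp add: quotient)
qed

lemma pgf_eq_sigma_ratio:
  assumes "0 < k"
  shows "(\<Sum>p\<le>k. g ^ p / sigma \<phi> k g * bellB \<phi> k p * u ^ p) = sigma \<phi> k (g * u) / sigma \<phi> k g"
  using assms
  by (simp add: sigma_eq_sum_atMost sum_divide_distrib power_mult_distrib ac_simps)

lemma mean_eq_sigma_log_derivative:
  assumes "0 < k"
  shows "(\<Sum>p\<le>k. real p * (g ^ p / sigma \<phi> k g * bellB \<phi> k p)) = g * deriv (sigma \<phi> k) g / sigma \<phi> k g"
proof -
  have "(sigma \<phi> k has_real_derivative (\<Sum>l\<le>k. bellB \<phi> k l * (real l * g ^ (l - 1)))) (at g)"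
    unfolding sigma_eq_sum_atMost[OF assms, abs_def] by (auto intro!: derivative_eq_intros simp: ac_simps)
  then have "g * deriv (sigma \<phi> k) g = (\<Sum>l\<le>k. g * (bellB \<phi> k l * (real l * g ^ (l - 1))))"
    by (simp add: DERIV_imp_deriv sum_distrib_left)
  also have "\<dots> = (\<Sum>l\<le>k. real l * g ^ l * bellB \<phi> k l)"
    by (intro sum.cong) (auto simp: power_eq_if)
  finally show ?thesis
    by (simp add: sum_divide_distrib ac_simps)
qed

section \<open>Random order of the nonempty boxes\<close>

lemma finite_comps: "finite (comps n k)"
proof (rule finite_subset)
  show "comps n k \<subseteq> {xs. set xs \<subseteq> {0..k} \<and> length xs = n}"
    unfolding comps_def using member_le_sum_list by fastforce
qed (simp add: finite_lists_length_eq)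

lemma nonempty_boxes_subset: "nonempty_boxes ks \<subseteq> {..<length ks}"
  unfolding nonempty_boxes_def by auto

lemma finite_nonempty_boxes: "finite (nonempty_boxes ks)"
  using finite_subset[OF nonempty_boxes_subset] by simp

lemma sum_nonempty_boxes: "(\<Sum>j\<in>nonempty_boxes ks. ks ! j) = sum_list ks"
proof -
  have "(\<Sum>j\<in>nonempty_boxes ks. ks ! j) = (\<Sum>j<length ks. ks ! j)"
    by (rule sum.mono_neutral_left) (auto simp: nonempty_boxes_def)
  also have "\<dots> = sum_list ks" by (simp add: sum_list_sum_nth atLeast0LessThan)
  finally show ?thesis .
qed

definition nonzero_parts :: "nat list \<Rightarrow> nat multiset" where
  "nonzero_parts ks = image_mset (\<lambda>m. ks ! m) (mset_set (nonempty_boxes ks))"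

lemma size_nonzero_parts: "size (nonzero_parts ks) = Pnum ks"
  by (simp add: nonzero_parts_def Pnum_def)

lemma count_nonzero_parts:
  assumes "i \<ge> 1"
  shows "count (nonzero_parts ks) i = Acount ks i"
proof -
  have "count (nonzero_parts ks) i = card ((\<lambda>m. ks ! m) -` {i} \<inter> nonempty_boxes ks)"
    unfolding nonzero_parts_def count_image_mset using finite_nonempty_boxes
    by (simp add: count_mset_set)
  also have "(\<lambda>m. ks ! m) -` {i} \<inter> nonempty_boxes ks = {m. m < length ks \<and> ks ! m = i}"
    using assms by (auto simp: nonempty_boxes_def)
  finally show ?thesis by (simp add: Acount_def)
qed

definition compositions_with :: "nat \<Rightarrow> (nat multiset \<Rightarrow> bool) \<Rightarrow> nat list set" where
  "compositions_with k F = {kk. (\<forall>x\<in>set kk. 0 < x) \<and> sum_list kk = k \<and> F (mset kk)}"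

lemma length_le_sum_list_pos: "\<forall>x\<in>set xs. 0 < (x::nat) \<Longrightarrow> length xs \<le> sum_list xs"
  by (induction xs) auto

lemma finite_compositions_with: "finite (compositions_with k F)"
proof (rule finite_subset)
  show "compositions_with k F \<subseteq> {xs. set xs \<subseteq> {0..k} \<and> length xs \<le> k}"
    unfolding compositions_with_def using length_le_sum_list_pos member_le_sum_list by fastforce
qed (simp add: finite_lists_length_le)

lemma enumeration_of_nonempty_boxes:
  assumes "set js = nonempty_boxes ks" and "distinct js"
  shows "\<forall>x\<in>set (map (\<lambda>j. ks ! j) js). 0 < x"
    and "sum_list (map (\<lambda>j. ks ! j) js) = sum_list ks"
    and "mset (map (\<lambda>j. ks ! j) js) = nonzero_parts ks"
    and "length js = Pnum ks"
proof -
  show "\<forall>x\<in>set (map (\<lambda>j. ks ! j) js). 0 < x"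
    using assms(1) by (auto simp: nonempty_boxes_def)
  show "sum_list (map (\<lambda>j. ks ! j) js) = sum_list ks"
    using sum.distinct_set_conv_list[OF assms(2), of "\<lambda>j. ks ! j"] assms(1) sum_nonempty_boxes
    by simp
  show "mset (map (\<lambda>j. ks ! j) js) = nonzero_parts ks"
    unfolding nonzero_parts_def using assms by (metis mset_map mset_set_set)
  show "length js = Pnum ks"
    unfolding Pnum_def using assms distinct_card by metis
qed

lemma sum_order_prob_compositions_with:
  assumes ks: "ks \<in> comps n k"
  shows "(\<Sum>kk\<in>compositions_with k F. if Pnum ks = length kk then order_prob ks kk else 0)
     = (if F (nonzero_parts ks) then 1 else 0)"
proof -
  define P where "P = permutations_of_set (nonempty_boxes ks)"
  define g where "g = (\<lambda>j. ks ! j)"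
  define PF where "PF = {js\<in>P. map g js \<in> compositions_with k F}"
  have P_props: "length js = Pnum ks \<and> (map g js \<in> compositions_with k F \<longleftrightarrow> F (nonzero_parts ks))"
    if "js \<in> P" for js
    using that enumeration_of_nonempty_boxes[of js ks] ks
    unfolding P_def permutations_of_set_def compositions_with_def comps_def g_def by auto
  have "(\<Sum>kk\<in>compositions_with k F. if Pnum ks = length kk then order_prob ks kk else 0)
      = (\<Sum>kk\<in>compositions_with k F. real (card {js\<in>PF. map g js = kk}) / fact (Pnum ks))"
  proof (rule sum.cong[OF refl])
    fix kk assume kk: "kk \<in> compositions_with k F"
    have "{js. distinct js \<and> set js = nonempty_boxes ks \<and> map (\<lambda>j. ks ! j) js = kk}
        = {js\<in>PF. map g js = kk}"
      using kk unfolding PF_def P_def permutations_of_set_def g_def by auto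
    moreover have "{js\<in>PF. map g js = kk} = {}" if "Pnum ks \<noteq> length kk"
      using that P_props unfolding PF_def by auto
    ultimately show "(if Pnum ks = length kk then order_prob ks kk else 0)
        = real (card {js\<in>PF. map g js = kk}) / fact (Pnum ks)"
      unfolding order_prob_def by (metis card.empty of_nat_0 div_0)
  qed
  also have "\<dots> = real (\<Sum>kk\<in>compositions_with k F. card {js\<in>PF. map g js = kk}) / fact (Pnum ks)"
    by (simp add: sum_divide_distrib)
  also have "(\<Sum>kk\<in>compositions_with k F. card {js\<in>PF. map g js = kk}) = card PF"
  proof -
    have "(\<Sum>kk\<in>compositions_with k F. \<Sum>js\<in>{js\<in>PF. map g js = kk}. 1::nat) = (\<Sum>js\<in>PF. 1)"
      by (rule sum.group) (auto simp: finite_compositions_with PF_def P_def finite_nonempty_boxes)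
    then show ?thesis by simp
  qed
  also have "PF = (if F (nonzero_parts ks) then P else {})"
    using P_props unfolding PF_def by auto
  finally show ?thesis
    unfolding P_def by (simp add: finite_nonempty_boxes Pnum_def)
qed

lemma Kev_eq_sum_hatK_prob:
  assumes "\<forall>ks\<in>comps n k. E ks = F (nonzero_parts ks)"
  shows "Kev \<phi> n k \<theta> E = (\<Sum>kk\<in>compositions_with k F. hatK_prob \<phi> n k \<theta> kk)"
proof -
  have "(\<Sum>kk\<in>compositions_with k F. hatK_prob \<phi> n k \<theta> kk)
     = (\<Sum>ks\<in>comps n k. Kprob \<phi> n k \<theta> ks *
          (\<Sum>kk\<in>compositions_with k F. if Pnum ks = length kk then order_prob ks kk else 0))"
    unfolding hatK_prob_def sum_distrib_left
    by (subst sum.swap) (simp add: if_distrib cong: if_cong)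
  also have "\<dots> = (\<Sum>ks\<in>comps n k. if E ks then Kprob \<phi> n k \<theta> ks else 0)"
    using assms by (intro sum.cong refl) (simp add: sum_order_prob_compositions_with)
  finally show ?thesis unfolding Kev_def by simp
qed

section \<open>Placements of a composition into the boxes\<close>

definition distinct_lists :: "nat \<Rightarrow> nat \<Rightarrow> nat list set" where
  "distinct_lists n p = {js. length js = p \<and> distinct js \<and> set js \<subseteq> {..<n}}"

lemma finite_distinct_lists: "finite (distinct_lists n p)"
proof (rule finite_subset)
  show "distinct_lists n p \<subseteq> {xs. set xs \<subseteq> {..<n} \<and> length xs = p}"
    unfolding distinct_lists_def by auto
qed (simp add: finite_lists_length_eq)

lemma card_distinct_lists:
  assumes "p \<le> n"
  shows "real (card (distinct_lists n p)) = (\<Prod>i<p. real n - real i)"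
proof -
  have "card (distinct_lists n p) = \<Prod>{n - p + 1..n}"
    unfolding distinct_lists_def using card_lists_distinct_length_eq[of "{..<n}" p] assms by simp
  also have "{n - p + 1..n} = (\<lambda>i. n - i) ` {..<p}"
  proof (rule set_eqI)
    show "x \<in> {n - p + 1..n} \<longleftrightarrow> x \<in> (\<lambda>i. n - i) ` {..<p}" for x
      using assms by (auto simp: image_iff intro!: bexI[of _ "n - x"])
  qed
  also have "\<Prod>((\<lambda>i. n - i) ` {..<p}) = (\<Prod>i<p. n - i)"
    using assms by (subst prod.reindex) (auto simp: inj_on_def)
  finally show ?thesis
    using assms by (simp add: of_nat_diff)
qed

definition occupancy :: "nat \<Rightarrow> nat list \<Rightarrow> nat list \<Rightarrow> nat list" where
  "occupancy n kk js = map (\<lambda>m. \<Sum>q<length kk. if js ! q = m then kk ! q else 0) [0..<n]"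

lemma length_occupancy [simp]: "length (occupancy n kk js) = n"
  by (simp add: occupancy_def)

context
  fixes n :: nat and kk js :: "nat list"
  assumes js: "js \<in> distinct_lists n (length kk)"
begin

lemma occupancy_nth_placed:
  assumes "q < length kk"
  shows "occupancy n kk js ! (js ! q) = kk ! q"
proof -
  have js': "length js = length kk" "distinct js" "set js \<subseteq> {..<n}"
    using js by (auto simp: distinct_lists_def)
  then have "js ! q < n" by (metis assms nth_mem lessThan_iff subsetD)
  then have "occupancy n kk js ! (js ! q) = (\<Sum>q'<length kk. if js ! q' = js ! q then kk ! q' else 0)"
    by (simp add: occupancy_def)
  also have "\<dots> = (\<Sum>q'<length kk. if q' = q then kk ! q' else 0)"
    using js' assms by (intro sum.cong refl) (simp add: nth_eq_iff_index_eq)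
  also have "\<dots> = kk ! q" using assms by simp
  finally show ?thesis .
qed

lemma occupancy_nth_unplaced:
  assumes "m < n" and "m \<notin> set js"
  shows "occupancy n kk js ! m = 0"
proof -
  have "length js = length kk" using js by (simp add: distinct_lists_def)
  then have "js ! q \<noteq> m" if "q < length kk" for q
    using that assms(2) by (metis nth_mem)
  then show ?thesis using assms(1) by (simp add: occupancy_def)
qed

lemma nonempty_boxes_occupancy:
  assumes "\<forall>x\<in>set kk. 0 < x"
  shows "nonempty_boxes (occupancy n kk js) = set js"
proof
  show "nonempty_boxes (occupancy n kk js) \<subseteq> set js"
  proof
    fix m assume "m \<in> nonempty_boxes (occupancy n kk js)"
    then have "m < n" "0 < occupancy n kk js ! m" by (auto simp: nonempty_boxes_def)
    then show "m \<in> set js" by (cases "m \<in> set js") (auto simp: occupancy_nth_unplaced)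
  qed
  show "set js \<subseteq> nonempty_boxes (occupancy n kk js)"
  proof
    fix m assume "m \<in> set js"
    then obtain q where q: "q < length js" "m = js ! q" by (metis in_set_conv_nth)
    have js': "length js = length kk" "set js \<subseteq> {..<n}" using js by (auto simp: distinct_lists_def)
    then have "m < n" using q by (metis nth_mem lessThan_iff subsetD)
    moreover have "occupancy n kk js ! m = kk ! q" using occupancy_nth_placed q js' by simp
    moreover have "0 < kk ! q" using assms q js' by simp
    ultimately show "m \<in> nonempty_boxes (occupancy n kk js)" by (simp add: nonempty_boxes_def)
  qed
qed

lemma Pnum_occupancy:
  assumes "\<forall>x\<in>set kk. 0 < x"
  shows "Pnum (occupancy n kk js) = length kk"
proof -
  have "length js = length kk" "distinct js" using js by (auto simp: distinct_lists_def)
  then show ?thesis unfolding Pnum_def nonempty_boxes_occupancy[OF assms] by (simp add: distinct_card)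
qed

lemma sum_list_occupancy: "sum_list (occupancy n kk js) = sum_list kk"
proof -
  have js': "length js = length kk" "set js \<subseteq> {..<n}" using js by (auto simp: distinct_lists_def)
  have "sum_list (occupancy n kk js) = (\<Sum>m<n. \<Sum>q<length kk. if js ! q = m then kk ! q else 0)"
    unfolding occupancy_def interv_sum_list_conv_sum_set_nat by (simp add: atLeast0LessThan)
  also have "\<dots> = (\<Sum>q<length kk. \<Sum>m<n. if js ! q = m then kk ! q else 0)"
    by (rule sum.swap)
  also have "\<dots> = (\<Sum>q<length kk. kk ! q)"
  proof (rule sum.cong[OF refl])
    fix q assume "q \<in> {..<length kk}"
    then have "js ! q < n" using js' by (metis lessThan_iff nth_mem subsetD)
    then show "(\<Sum>m<n. if js ! q = m then kk ! q else 0) = kk ! q" by simp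
  qed
  also have "\<dots> = sum_list kk" by (simp add: sum_list_sum_nth atLeast0LessThan)
  finally show ?thesis .
qed

lemma prod_occupancy:
  "(\<Prod>m<n. sigma \<phi> (occupancy n kk js ! m) t / fact (occupancy n kk js ! m))
     = (\<Prod>q<length kk. sigma \<phi> (kk ! q) t / fact (kk ! q))"
proof -
  have js': "length js = length kk" "distinct js" "set js \<subseteq> {..<n}"
    using js by (auto simp: distinct_lists_def)
  let ?f = "\<lambda>m. sigma \<phi> (occupancy n kk js ! m) t / fact (occupancy n kk js ! m)"
  have "(\<Prod>m<n. ?f m) = (\<Prod>m\<in>set js. ?f m)"
    using js'(3) by (intro prod.mono_neutral_right) (auto simp: occupancy_nth_unplaced sigma_def)
  also have "set js = (\<lambda>q. js ! q) ` {..<length kk}"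
    using js'(1) by (auto simp: set_conv_nth)
  also have "(\<Prod>m\<in>(\<lambda>q. js ! q) ` {..<length kk}. ?f m) = (\<Prod>q<length kk. ?f (js ! q))"
    using js' by (subst prod.reindex) (auto simp: inj_on_def nth_eq_iff_index_eq)
  also have "\<dots> = (\<Prod>q<length kk. sigma \<phi> (kk ! q) t / fact (kk ! q))"
    by (simp add: occupancy_nth_placed)
  finally show ?thesis .
qed

end

lemma occupancy_eq_iff:
  assumes ks: "ks \<in> comps n k" and pos: "\<forall>x\<in>set kk. 0 < x"
  shows "js \<in> distinct_lists n (length kk) \<and> occupancy n kk js = ks \<longleftrightarrow>
    Pnum ks = length kk \<and> distinct js \<and> set js = nonempty_boxes ks \<and> map (\<lambda>j. ks ! j) js = kk"
proof
  assume "js \<in> distinct_lists n (length kk) \<and> occupancy n kk js = ks"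
  then have js: "js \<in> distinct_lists n (length kk)" and ks_eq: "ks = occupancy n kk js" by auto
  have "map (\<lambda>j. ks ! j) js = kk"
    using js occupancy_nth_placed[OF js] unfolding ks_eq
    by (intro nth_equalityI) (auto simp: distinct_lists_def)
  then show "Pnum ks = length kk \<and> distinct js \<and> set js = nonempty_boxes ks \<and> map (\<lambda>j. ks ! j) js = kk"
    using js Pnum_occupancy[OF js pos] nonempty_boxes_occupancy[OF js pos] unfolding ks_eq
    by (simp add: distinct_lists_def)
next
  assume a: "Pnum ks = length kk \<and> distinct js \<and> set js = nonempty_boxes ks \<and> map (\<lambda>j. ks ! j) js = kk"
  have len: "length ks = n" using ks by (simp add: comps_def)
  have jl: "length js = length kk" using a distinct_card unfolding Pnum_def by (metis length_map)
  have js: "js \<in> distinct_lists n (length kk)"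
    using a jl nonempty_boxes_subset[of ks] len by (auto simp: distinct_lists_def)
  have "occupancy n kk js ! m = ks ! m" if m: "m < n" for m
  proof (cases "m \<in> set js")
    case True
    then obtain q where q: "q < length js" "m = js ! q" by (metis in_set_conv_nth)
    then have "occupancy n kk js ! m = kk ! q" using occupancy_nth_placed[OF js] jl by simp
    also have "\<dots> = ks ! m" using a q by (metis nth_map)
    finally show ?thesis .
  next
    case False
    then have "ks ! m = 0" using a m len by (auto simp: nonempty_boxes_def)
    then show ?thesis using occupancy_nth_unplaced[OF js m False] by simp
  qed
  then show "js \<in> distinct_lists n (length kk) \<and> occupancy n kk js = ks"
    using js len by (auto intro: nth_equalityI)
qed

text \<open>Every configuration whose nonempty boxes, read in some order js, carry kk arises from
  exactly one injective placement js of the parts of kk, and all of them have the same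
  probability; hence the factor (n)_p / p!.\<close>
lemma hatK_prob_eq:
  assumes pos: "\<forall>x\<in>set kk. 0 < x" and sk: "sum_list kk = k"
  shows "hatK_prob \<phi> n k t kk = real (card (distinct_lists n (length kk))) / fact (length kk) *
     (fact k / sigma \<phi> k (real n * t) * (\<Prod>q<length kk. sigma \<phi> (kk ! q) t / fact (kk ! q)))"
proof -
  define p where "p = length kk"
  define c where "c = fact k / sigma \<phi> k (real n * t) * (\<Prod>q<p. sigma \<phi> (kk ! q) t / fact (kk ! q))"
  define J where "J ks = {js. distinct js \<and> set js = nonempty_boxes ks \<and> map (\<lambda>j. ks ! j) js = kk}" for ks
  have in_comps: "occupancy n kk js \<in> comps n k" if "js \<in> distinct_lists n p" for js
    using that sum_list_occupancy sk unfolding p_def comps_def by simp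
  have Kprob_occupancy: "Kprob \<phi> n k t (occupancy n kk js) = c" if "js \<in> distinct_lists n p" for js
    using that in_comps[OF that] prod_occupancy unfolding Kprob_def c_def p_def by simp
  have fibre: "{js\<in>distinct_lists n p. occupancy n kk js = ks} = (if Pnum ks = p then J ks else {})"
    if "ks \<in> comps n k" for ks
    using occupancy_eq_iff[OF that pos] unfolding J_def p_def by auto
  have "real (card (distinct_lists n p)) * c = (\<Sum>js\<in>distinct_lists n p. c)"
    by simp
  also have "\<dots> = (\<Sum>ks\<in>comps n k. \<Sum>js\<in>{js\<in>distinct_lists n p. occupancy n kk js = ks}. c)"
    by (rule sum.group[symmetric]) (use finite_distinct_lists finite_comps in_comps in auto)
  also have "\<dots> = (\<Sum>ks\<in>comps n k. if Pnum ks = p then Kprob \<phi> n k t ks * real (card (J ks)) else 0)"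
  proof (rule sum.cong[OF refl])
    fix ks assume ks: "ks \<in> comps n k"
    show "(\<Sum>js\<in>{js\<in>distinct_lists n p. occupancy n kk js = ks}. c)
        = (if Pnum ks = p then Kprob \<phi> n k t ks * real (card (J ks)) else 0)"
    proof (cases "Pnum ks = p \<and> J ks \<noteq> {}")
      case True
      then obtain js where "js \<in> J ks" by auto
      then have "js \<in> distinct_lists n p \<and> occupancy n kk js = ks"
        using fibre[OF ks] True by auto
      then have "Kprob \<phi> n k t ks = c" using Kprob_occupancy by blast
      then show ?thesis using fibre[OF ks] True by simp
    qed (use fibre[OF ks] in auto)
  qed
  also have "\<dots> = fact p * hatK_prob \<phi> n k t kk"
    unfolding hatK_prob_def order_prob_def J_def p_def sum_distrib_left
    by (intro sum.cong refl) auto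
  finally have "hatK_prob \<phi> n k t kk = real (card (distinct_lists n p)) / fact p * c"
    by (simp add: field_simps)
  then show ?thesis unfolding c_def p_def .
qed

lemma tendsto_card_distinct_lists_times_power:
  assumes "\<theta> \<longlonglongrightarrow> 0" and "(\<lambda>n. real n * \<theta> n) \<longlonglongrightarrow> \<gamma>"
  shows "(\<lambda>n. real (card (distinct_lists n p)) * \<theta> n ^ p) \<longlonglongrightarrow> \<gamma> ^ p"
proof -
  have "(\<lambda>n. \<Prod>i<p. real n * \<theta> n - real i * \<theta> n) \<longlonglongrightarrow> (\<Prod>i<p. \<gamma> - real i * 0)"
    by (intro tendsto_intros assms)
  moreover have "\<forall>\<^sub>F n in sequentially.
      (\<Prod>i<p. real n * \<theta> n - real i * \<theta> n) = real (card (distinct_lists n p)) * \<theta> n ^ p"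
  proof (rule eventually_sequentiallyI)
    fix n assume "p \<le> n"
    then have "real (card (distinct_lists n p)) * \<theta> n ^ p = (\<Prod>i<p. real n - real i) * (\<Prod>i<p. \<theta> n)"
      by (simp add: card_distinct_lists)
    also have "\<dots> = (\<Prod>i<p. real n * \<theta> n - real i * \<theta> n)"
      by (simp only: prod.distrib[symmetric] left_diff_distrib)
    finally show "(\<Prod>i<p. real n * \<theta> n - real i * \<theta> n) = real (card (distinct_lists n p)) * \<theta> n ^ p"
      by simp
  qed
  ultimately show ?thesis
    by (simp add: Lim_transform_eventually)
qed

section \<open>Rearrangements of a multiset of parts\<close>

lemma count_sum_replicate_mset:
  "finite I \<Longrightarrow> count (\<Sum>i\<in>I. replicate_mset (a i) i) x = (if x \<in> I then a x else 0)"
  by (simp add: count_sum)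

lemma sum_mset_sum_replicate_mset:
  "finite I \<Longrightarrow> sum_mset (\<Sum>i\<in>I. replicate_mset (a i) (i::nat)) = (\<Sum>i\<in>I. a i * i)"
  by (induction I rule: finite_induct) auto

lemma size_sum_replicate_mset:
  "finite I \<Longrightarrow> size (\<Sum>i\<in>I. replicate_mset (a i) i) = (\<Sum>i\<in>I. a i)"
  by (induction I rule: finite_induct) auto

lemma prod_mset_image_sum_replicate_mset:
  "finite I \<Longrightarrow> prod_mset (image_mset f (\<Sum>i\<in>I. replicate_mset (a i) i)) = (\<Prod>i\<in>I. f i ^ a i)"
  by (induction I rule: finite_induct) auto

lemma card_permutations_of_sum_replicate_mset:
  assumes "finite I"
  shows "real (card (permutations_of_multiset (\<Sum>i\<in>I. replicate_mset (a i) i)))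
       = fact (\<Sum>i\<in>I. a i) / (\<Prod>i\<in>I. fact (a i))"
proof -
  define A where "A = (\<Sum>i\<in>I. replicate_mset (a i) i)"
  have count_A: "count A x = (if x \<in> I then a x else 0)" for x
    unfolding A_def using assms by (rule count_sum_replicate_mset)
  have "set_mset A \<subseteq> I"
    using count_A by (metis count_eq_zero_iff subsetI)
  then have "(\<Prod>x\<in>set_mset A. fact (count A x)) = (\<Prod>x\<in>I. fact (count A x) :: nat)"
    using assms by (intro prod.mono_neutral_left) (auto simp: not_in_iff)
  also have "\<dots> = (\<Prod>x\<in>I. fact (a x))"
    using count_A by (intro prod.cong) auto
  finally have "card (permutations_of_multiset A) * (\<Prod>x\<in>I. fact (a x)) = fact (\<Sum>i\<in>I. a i)"
    using card_permutations_of_multiset_aux[of A] size_sum_replicate_mset[OF assms]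
    unfolding A_def by simp
  then have "real (card (permutations_of_multiset A) * (\<Prod>x\<in>I. fact (a x))) = fact (\<Sum>i\<in>I. a i)"
    by (simp only: of_nat_fact)
  then have "real (card (permutations_of_multiset A)) * (\<Prod>x\<in>I. fact (a x)) = fact (\<Sum>i\<in>I. a i)"
    by (simp add: of_nat_prod)
  moreover have "(\<Prod>x\<in>I. fact (a x) :: real) > 0" by (intro prod_pos) auto
  ultimately show ?thesis unfolding A_def by (simp add: field_simps)
qed

lemma prod_nth_permutation_of_sum_replicate_mset:
  fixes f :: "'a \<Rightarrow> 'b::comm_monoid_mult"
  assumes "finite I" and "kk \<in> permutations_of_multiset (\<Sum>i\<in>I. replicate_mset (a i) i)"
  shows "(\<Prod>q<length kk. f (kk ! q)) = (\<Prod>i\<in>I. f i ^ a i)"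
proof -
  have "(\<Prod>q<length kk. f (kk ! q)) = prod_mset (image_mset f (mset kk))"
    by (simp add: prod_list_map_eq_prod_nth[symmetric] flip: prod_mset_prod_list)
  then show ?thesis
    using assms by (simp add: permutations_of_multiset_def prod_mset_image_sum_replicate_mset)
qed

lemma compositions_with_counts_eq_permutations:
  assumes "(\<Sum>i=1..k. i * a i) = k"
  shows "compositions_with k (\<lambda>M. (\<forall>i\<in>{1..k}. count M i = a i) \<and> size M = (\<Sum>i=1..k. a i))
       = permutations_of_multiset (\<Sum>i=1..k. replicate_mset (a i) i)"
    (is "compositions_with k ?F = permutations_of_multiset ?A")
proof (intro set_eqI iffI)
  have count_A: "count ?A x = (if x \<in> {1..k} then a x else 0)" for x
    by (simp add: count_sum_replicate_mset)
  {
    fix kk assume "kk \<in> compositions_with k ?F"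
    then have pos: "\<forall>x\<in>set kk. 0 < x" and sum: "sum_list kk = k" and F: "?F (mset kk)"
      by (auto simp: compositions_with_def)
    have parts: "x \<in> {1..k}" if "x \<in> set kk" for x
      using that pos sum member_le_sum_list[of x kk] by (auto simp: Suc_le_eq)
    have "count (mset kk) x = count ?A x" for x
    proof (cases "x \<in> {1..k}")
      case False
      then have "x \<notin> set kk" using parts by blast
      then show ?thesis using False count_A by (auto simp: count_mset_0_iff)
    qed (use F count_A in simp)
    then show "kk \<in> permutations_of_multiset ?A"
      by (simp add: permutations_of_multiset_def multiset_eqI)
  next
    fix kk assume "kk \<in> permutations_of_multiset ?A"
    then have m: "mset kk = ?A" by (simp add: permutations_of_multiset_def)
    have "0 < x" if "x \<in> set kk" for x
    proof -
      have "x \<in># ?A" using that m by (metis set_mset_mset)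
      then have "count ?A x \<noteq> 0" by (simp only: count_eq_zero_iff not_not)
      then have "x \<in> {1..k}" using count_A[of x] by presburger
      then show "0 < x" by simp
    qed
    moreover have "sum_list kk = k"
    proof -
      have "sum_list kk = sum_mset ?A" using m by (metis sum_mset_sum_list)
      also have "\<dots> = (\<Sum>i=1..k. a i * i)" by (simp add: sum_mset_sum_replicate_mset)
      also have "\<dots> = k" using assms by (simp add: mult.commute)
      finally show ?thesis .
    qed
    moreover have "?F (mset kk)"
      unfolding m using count_A by (simp add: size_sum_replicate_mset)
    ultimately show "kk \<in> compositions_with k ?F" by (simp add: compositions_with_def)
  }
qed

section \<open>The limit \<open>n \<rightarrow> \<infinity>\<close>, \<open>n\<theta> \<rightarrow> \<gamma>\<close>\<close>

locale star_limit =
  fixes \<phi> :: "nat \<Rightarrow> real" and k :: nat and \<gamma> :: real and \<theta> :: "nat \<Rightarrow> real"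
  assumes phi_nonneg: "\<And>m. m \<ge> 1 \<Longrightarrow> \<phi> m \<ge> 0"
    and phi1: "\<phi> 1 > 0"
    and k_pos: "0 < k"
    and gamma_pos: "\<gamma> > 0"
    and theta_pos: "\<And>n. \<theta> n > 0"
    and theta_lim: "\<theta> \<longlonglongrightarrow> 0"
    and n_theta_lim: "(\<lambda>n. real n * \<theta> n) \<longlonglongrightarrow> \<gamma>"
begin

lemma sigma_gamma_pos: "sigma \<phi> k \<gamma> > 0"
  using sigma_pos phi_nonneg phi1 gamma_pos by blast

lemma tendsto_hatK_prob:
  assumes pos: "\<forall>x\<in>set kk. 0 < x" and sum: "sum_list kk = k"
  shows "(\<lambda>n. hatK_prob \<phi> n k (\<theta> n) kk) \<longlonglongrightarrow>
          fact k / fact (length kk) * \<gamma> ^ length kk / sigma \<phi> k \<gamma>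
            * (\<Prod>q<length kk. \<phi> (kk ! q) / fact (kk ! q))"
proof -
  define p where "p = length kk"
  define r where "r n = (\<Prod>q<p. sigma \<phi> (kk ! q) (\<theta> n) / \<theta> n / fact (kk ! q))" for n
  have "hatK_prob \<phi> n k (\<theta> n) kk
      = real (card (distinct_lists n p)) * \<theta> n ^ p / fact p * (fact k / sigma \<phi> k (real n * \<theta> n) * r n)"
    for n
  proof -
    have "(\<Prod>q<p. sigma \<phi> (kk ! q) (\<theta> n) / fact (kk ! q)) = (\<Prod>q<p. \<theta> n * (sigma \<phi> (kk ! q) (\<theta> n) / \<theta> n / fact (kk ! q)))"
      using theta_pos[of n] by (intro prod.cong) auto
    also have "\<dots> = \<theta> n ^ p * r n"
      by (simp only: r_def prod.distrib prod_constant card_lessThan)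
    finally show ?thesis
      unfolding hatK_prob_eq[OF pos sum] p_def[symmetric] by simp
  qed
  moreover have "r \<longlonglongrightarrow> (\<Prod>q<p. \<phi> (kk ! q) / fact (kk ! q))"
    unfolding r_def
  proof (intro tendsto_prod tendsto_divide tendsto_const)
    fix q assume "q \<in> {..<p}"
    then have "0 < kk ! q" using pos p_def by simp
    then show "(\<lambda>n. sigma \<phi> (kk ! q) (\<theta> n) / \<theta> n) \<longlonglongrightarrow> \<phi> (kk ! q)"
      using theta_pos theta_lim by (intro tendsto_sigma_over_arg) (auto simp: less_imp_neq[symmetric])
  qed simp
  moreover have "(\<lambda>n. sigma \<phi> k (real n * \<theta> n)) \<longlonglongrightarrow> sigma \<phi> k \<gamma>"
    using isCont_tendsto_compose[OF isCont_sigma n_theta_lim] .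
  ultimately have "(\<lambda>n. hatK_prob \<phi> n k (\<theta> n) kk) \<longlonglongrightarrow>
      \<gamma> ^ p / fact p * (fact k / sigma \<phi> k \<gamma> * (\<Prod>q<p. \<phi> (kk ! q) / fact (kk ! q)))"
    using sigma_gamma_pos theta_lim n_theta_lim
    by (simp only:) (intro tendsto_intros tendsto_card_distinct_lists_times_power; simp)
  then show ?thesis
    unfolding p_def by (simp add: field_simps)
qed

lemma tendsto_Pnum:
  "(\<lambda>n. Kev \<phi> n k (\<theta> n) (\<lambda>ks. Pnum ks = p)) \<longlonglongrightarrow> \<gamma> ^ p / sigma \<phi> k \<gamma> * bellB \<phi> k p"
proof -
  have "compositions_with k (\<lambda>M. size M = p) = compositions p k"
    unfolding compositions_with_def compositions_def by auto
  moreover have "Kev \<phi> n k (\<theta> n) (\<lambda>ks. Pnum ks = p)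
      = (\<Sum>kk\<in>compositions_with k (\<lambda>M. size M = p). hatK_prob \<phi> n k (\<theta> n) kk)" for n
    by (rule Kev_eq_sum_hatK_prob) (simp add: size_nonzero_parts)
  ultimately have "Kev \<phi> n k (\<theta> n) (\<lambda>ks. Pnum ks = p) = (\<Sum>kk\<in>compositions p k. hatK_prob \<phi> n k (\<theta> n) kk)"
    for n
    by simp
  moreover have "(\<lambda>n. \<Sum>kk\<in>compositions p k. hatK_prob \<phi> n k (\<theta> n) kk) \<longlonglongrightarrow>
      (\<Sum>kk\<in>compositions p k. \<gamma> ^ p / sigma \<phi> k \<gamma> *
         (fact k / fact p * (\<Prod>q<length kk. \<phi> (kk ! q) / fact (kk ! q))))"
  proof (rule tendsto_sum)
    fix kk assume "kk \<in> compositions p k"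
    then show "(\<lambda>n. hatK_prob \<phi> n k (\<theta> n) kk) \<longlonglongrightarrow>
        \<gamma> ^ p / sigma \<phi> k \<gamma> * (fact k / fact p * (\<Prod>q<length kk. \<phi> (kk ! q) / fact (kk ! q)))"
      using tendsto_hatK_prob[of kk] by (simp add: compositions_def field_simps)
  qed
  ultimately show ?thesis
    by (simp add: bellB_eq_sum_compositions sum_distrib_left)
qed

lemma tendsto_hatK_prob_given_Pnum:
  assumes "\<forall>x\<in>set kk. 0 < x" and "sum_list kk = k" and "bellB \<phi> k (length kk) > 0"
  shows "(\<lambda>n. hatK_prob \<phi> n k (\<theta> n) kk / Kev \<phi> n k (\<theta> n) (\<lambda>ks. Pnum ks = length kk))
     \<longlonglongrightarrow> fact k / fact (length kk) / bellB \<phi> k (length kk)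
            * (\<Prod>q<length kk. \<phi> (kk ! q) / fact (kk ! q))"
proof -
  have "\<gamma> ^ length kk / sigma \<phi> k \<gamma> * bellB \<phi> k (length kk) \<noteq> 0"
    using assms(3) sigma_gamma_pos gamma_pos by simp
  from tendsto_divide[OF tendsto_hatK_prob[OF assms(1,2)] tendsto_Pnum this]
  show ?thesis
    using assms(3) sigma_gamma_pos gamma_pos by (simp add: field_simps)
qed

lemma tendsto_Acount:
  assumes ak: "(\<Sum>i=1..k. i * a i) = k" and ap: "p = (\<Sum>i=1..k. a i)"
  shows "(\<lambda>n. Kev \<phi> n k (\<theta> n) (\<lambda>ks. (\<forall>i\<in>{1..k}. Acount ks i = a i) \<and> Pnum ks = p))
          \<longlonglongrightarrow> \<gamma> ^ p * fact k / sigma \<phi> k \<gamma> * (\<Prod>i=1..k. (\<phi> i / fact i) ^ a i / fact (a i))"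
proof -
  define A where "A = (\<Sum>i=1..k. replicate_mset (a i) i)"
  define Q where "Q = (\<Prod>i=1..k. (\<phi> i / fact i) ^ a i)"
  have perms: "compositions_with k (\<lambda>M. (\<forall>i\<in>{1..k}. count M i = a i) \<and> size M = p)
      = permutations_of_multiset A"
    unfolding A_def ap using compositions_with_counts_eq_permutations[OF ak] .
  have "Kev \<phi> n k (\<theta> n) (\<lambda>ks. (\<forall>i\<in>{1..k}. Acount ks i = a i) \<and> Pnum ks = p)
      = (\<Sum>kk\<in>permutations_of_multiset A. hatK_prob \<phi> n k (\<theta> n) kk)" for n
    unfolding perms[symmetric]
    by (rule Kev_eq_sum_hatK_prob) (simp add: size_nonzero_parts count_nonzero_parts)
  moreover have "(\<lambda>n. \<Sum>kk\<in>permutations_of_multiset A. hatK_prob \<phi> n k (\<theta> n) kk) \<longlonglongrightarrow>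
      (\<Sum>kk\<in>permutations_of_multiset A. fact k / fact p * \<gamma> ^ p / sigma \<phi> k \<gamma> * Q)"
  proof (rule tendsto_sum)
    fix kk assume kk: "kk \<in> permutations_of_multiset A"
    then have "kk \<in> compositions_with k (\<lambda>M. (\<forall>i\<in>{1..k}. count M i = a i) \<and> size M = p)"
      using perms by simp
    moreover have "length kk = p"
      using length_finite_permutations_of_multiset[OF kk] by (simp add: A_def ap size_sum_replicate_mset)
    moreover have "(\<Prod>q<length kk. \<phi> (kk ! q) / fact (kk ! q)) = Q"
      using prod_nth_permutation_of_sum_replicate_mset[OF _ kk[unfolded A_def], of "\<lambda>j. \<phi> j / fact j"]
      unfolding Q_def by simp
    ultimately show "(\<lambda>n. hatK_prob \<phi> n k (\<theta> n) kk) \<longlonglongrightarrow> fact k / fact p * \<gamma> ^ p / sigma \<phi> k \<gamma> * Q"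
      using tendsto_hatK_prob[of kk] by (simp add: compositions_with_def)
  qed
  moreover have "(\<Sum>kk\<in>permutations_of_multiset A. fact k / fact p * \<gamma> ^ p / sigma \<phi> k \<gamma> * Q)
      = \<gamma> ^ p * fact k / sigma \<phi> k \<gamma> * (\<Prod>i=1..k. (\<phi> i / fact i) ^ a i / fact (a i))"
  proof -
    define G where "G = (\<Prod>i=1..k. fact (a i) :: real)"
    have card: "real (card (permutations_of_multiset A)) = fact p / G"
      using card_permutations_of_sum_replicate_mset[of "{1..k}" a] unfolding A_def G_def ap by simp
    have "G > 0" unfolding G_def by (intro prod_pos) auto
    then have "(\<Sum>kk\<in>permutations_of_multiset A. fact k / fact p * \<gamma> ^ p / sigma \<phi> k \<gamma> * Q)
        = \<gamma> ^ p * fact k / sigma \<phi> k \<gamma> * (Q / G)"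
      using sigma_gamma_pos by (simp add: card field_simps)
    also have "Q / G = (\<Prod>i=1..k. (\<phi> i / fact i) ^ a i / fact (a i))"
      unfolding Q_def G_def by (simp add: prod_dividef)
    finally show ?thesis .
  qed
  ultimately show ?thesis by simp
qed

lemma tendsto_Acount_given_Pnum:
  assumes "(\<Sum>i=1..k. i * a i) = k" and "p = (\<Sum>i=1..k. a i)" and "bellB \<phi> k p > 0"
  shows "(\<lambda>n. Kev \<phi> n k (\<theta> n) (\<lambda>ks. (\<forall>i\<in>{1..k}. Acount ks i = a i) \<and> Pnum ks = p)
               / Kev \<phi> n k (\<theta> n) (\<lambda>ks. Pnum ks = p))
          \<longlonglongrightarrow> fact k / bellB \<phi> k p * (\<Prod>i=1..k. (\<phi> i / fact i) ^ a i / fact (a i))"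
proof -
  have "\<gamma> ^ p / sigma \<phi> k \<gamma> * bellB \<phi> k p \<noteq> 0"
    using assms(3) sigma_gamma_pos gamma_pos by simp
  from tendsto_divide[OF tendsto_Acount[OF assms(1,2)] tendsto_Pnum this]
  show ?thesis
    using assms(3) sigma_gamma_pos gamma_pos by (simp add: field_simps)
qed

end

theorem proposition7:
  fixes \<phi> :: "nat \<Rightarrow> real" and k :: nat and \<gamma> :: real and \<theta> :: "nat \<Rightarrow> real"
  assumes phi_nonneg: "\<And>m. m \<ge> 1 \<Longrightarrow> \<phi> m \<ge> 0"
    and phi1: "\<phi> 1 > 0"
    and radius: "\<exists>r>0. summable (\<lambda>m. \<phi> m / fact m * r ^ m)"
    and k: "k \<ge> 1" and \<gamma>: "\<gamma> > 0"
    and \<theta>_pos: "\<And>n. \<theta> n > 0"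
    and \<theta>_lim: "\<theta> \<longlonglongrightarrow> 0"
    and n\<theta>_lim: "(\<lambda>n. real n * \<theta> n) \<longlonglongrightarrow> \<gamma>"
  shows
    \<comment> \<open>(1)\<close>
    "(\<forall>kk. length kk \<le> k \<and> (\<forall>q<length kk. kk ! q \<ge> 1) \<and> sum_list kk = k \<longrightarrow>
        (\<lambda>n. hatK_prob \<phi> n k (\<theta> n) kk) \<longlonglongrightarrow>
          fact k / fact (length kk) * \<gamma> ^ length kk / sigma \<phi> k \<gamma>
            * (\<Prod>q<length kk. \<phi> (kk ! q) / fact (kk ! q)))
   \<and> \<comment> \<open>(2)\<close>
    (\<forall>p\<le>k. (\<lambda>n. Kev \<phi> n k (\<theta> n) (\<lambda>ks. Pnum ks = p)) \<longlonglongrightarrow>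
        \<gamma> ^ p / sigma \<phi> k \<gamma> * bellB \<phi> k p)
   \<and> (\<forall>u::real. (\<Sum>p\<le>k. \<gamma> ^ p / sigma \<phi> k \<gamma> * bellB \<phi> k p * u ^ p)
                 = sigma \<phi> k (\<gamma> * u) / sigma \<phi> k \<gamma>)
   \<and> (\<Sum>p\<le>k. real p * (\<gamma> ^ p / sigma \<phi> k \<gamma> * bellB \<phi> k p))
        = \<gamma> * deriv (sigma \<phi> k) \<gamma> / sigma \<phi> k \<gamma>
   \<and> \<comment> \<open>(3)\<close>
    (\<forall>kk. length kk \<le> k \<and> (\<forall>q<length kk. kk ! q \<ge> 1) \<and> sum_list kk = k
          \<and> bellB \<phi> k (length kk) > 0 \<longrightarrow>
        (\<lambda>n. hatK_prob \<phi> n k (\<theta> n) kk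
               / Kev \<phi> n k (\<theta> n) (\<lambda>ks. Pnum ks = length kk)) \<longlonglongrightarrow>
          fact k / fact (length kk) / bellB \<phi> k (length kk)
            * (\<Prod>q<length kk. \<phi> (kk ! q) / fact (kk ! q)))
   \<and> \<comment> \<open>(4)\<close>
    (\<forall>(a::nat \<Rightarrow> nat) p. (\<Sum>i=1..k. i * a i) = k \<and> p = (\<Sum>i=1..k. a i) \<longrightarrow>
        (\<lambda>n. Kev \<phi> n k (\<theta> n) (\<lambda>ks. (\<forall>i\<in>{1..k}. Acount ks i = a i) \<and> Pnum ks = p))
          \<longlonglongrightarrow> \<gamma> ^ p * fact k / sigma \<phi> k \<gamma>
                * (\<Prod>i=1..k. (\<phi> i / fact i) ^ a i / fact (a i)))
   \<and> (\<forall>(a::nat \<Rightarrow> nat) p. (\<Sum>i=1..k. i * a i) = k \<and> p = (\<Sum>i=1..k. a i)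
          \<and> bellB \<phi> k p > 0 \<longrightarrow>
        (\<lambda>n. Kev \<phi> n k (\<theta> n) (\<lambda>ks. (\<forall>i\<in>{1..k}. Acount ks i = a i) \<and> Pnum ks = p)
               / Kev \<phi> n k (\<theta> n) (\<lambda>ks. Pnum ks = p))
          \<longlonglongrightarrow> fact k / bellB \<phi> k p
                * (\<Prod>i=1..k. (\<phi> i / fact i) ^ a i / fact (a i)))"
proof -
  interpret star_limit \<phi> k \<gamma> \<theta>
    by unfold_locales (use phi_nonneg phi1 k \<gamma> \<theta>_pos \<theta>_lim n\<theta>_lim in auto)
  have k_pos: "0 < k" using k by simp
  have parts_pos: "(\<forall>x\<in>set kk. 0 < x) \<longleftrightarrow> (\<forall>q<length kk. kk ! q \<ge> 1)" for kk :: "nat list"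
    by (auto simp: all_set_conv_all_nth Suc_le_eq)
  show ?thesis
    using tendsto_hatK_prob tendsto_Pnum pgf_eq_sigma_ratio[OF k_pos]
      mean_eq_sigma_log_derivative[OF k_pos] tendsto_hatK_prob_given_Pnum
      tendsto_Acount tendsto_Acount_given_Pnum
    unfolding parts_pos by blast
qed

end
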